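(* Let $(\epsilon_n)$ be a sequence of positive numbers with $\epsilon_n=O(n^{-\tau})$ for some $\tau\in(0,1)$. Then for every $\mu\in\mathcal{P}(\mathbb{X})$ with $H(\mu)<\infty$, $$\lim_{n\to\infty}H(\hat\mu_{n,\epsilon_n})=H(\mu),\qquad\mathbb{P}_\mu\text{-a.s.}$$
   Context: $\mathbb{X}$ is a countably infinite set; for a probability $\mu$ on $\mathbb{X}$, $f_\mu(x)=\mu(\{x\})$, $A_\mu=\{x:f_\mu(x)>0\}$, and $H(\mu)=-\sum_{x\in A_\mu}f_\mu(x)\log f_\mu(x)$ ($\log$ to a fixed base $b>1$). Given i.i.d. $X_1,X_2,\dots\sim\mu$ with law $\mathbb{P}_\mu$, $\hat\mu_n(A)=\frac1n\sum_{k=1}^n\mathbb{1}_A(X_k)$ is the empirical measure. For $\epsilon>0$ the data-driven set is $\Gamma_\epsilon=\{x\in\mathbb{X}:\hat\mu_n(\{x\})\ge\epsilon\}$ and the data-driven estimate is the conditional empirical measure $\hat\mu_{n,\epsilon}=\hat\mu_n(\cdot\mid\Gamma_\epsilon)$, i.e. $\hat\mu_{n,\epsilon}(A)=\hat\mu_n(A\cap\Gamma_\epsilon)/\hat\mu_n(\Gamma_\epsilon)$ (defined arbitrarily when $\Gamma_\epsilon=\emptyset$). *)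

theory Defs
  imports "HOL-Probability.Probability" "HOL-Library.Landau_Symbols"
begin

definition entropy_fun :: "real \<Rightarrow> ('a \<Rightarrow> real) \<Rightarrow> real" where
  "entropy_fun b f = - infsum (\<lambda>x. f x * log b (f x)) {x. f x > 0}"

definition emp :: "nat \<Rightarrow> (nat \<Rightarrow> 'a) \<Rightarrow> 'a \<Rightarrow> real" where
  "emp n w x = real (card {k \<in> {..<n}. w k = x}) / real n"

definition Gam :: "nat \<Rightarrow> (nat \<Rightarrow> 'a) \<Rightarrow> real \<Rightarrow> 'a set" where
  "Gam n w eps = {x. emp n w x \<ge> eps}"

definition cond_emp :: "nat \<Rightarrow> (nat \<Rightarrow> 'a) \<Rightarrow> real \<Rightarrow> 'a \<Rightarrow> real" where
  "cond_emp n w eps x =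
     (if x \<in> Gam n w eps then emp n w x / (\<Sum>y\<in>Gam n w eps. emp n w y) else 0)"

end

theory Submission
  imports Defs
begin

text \<open>
  Almost surely, the empirical frequencies converge pointwise to the masses of \<open>\<mu>\<close>, and for
  every \<open>\<eta> > 0\<close> the empirical cross-entropy \<open>(1/n) \<Sum>k<n. - log b (f\<^sub>\<mu> X\<^sub>k)\<close> is
  eventually below \<open>H(\<mu>) + \<eta>\<close>. The latter is a one-sided strong law of large numbers for the
  nonnegative integrable variable \<open>- log b (f\<^sub>\<mu> X)\<close>, whose mean is \<open>H(\<mu>)\<close>; it is proved by
  truncation, Chebyshev's inequality and Borel--Cantelli along the subsequence \<open>\<lceil>a^j\<rceil>\<close>,
  and monotonicity of the partial sums in between.

  Fix such a sample path. Since \<open>\<epsilon>\<^sub>n \<rightarrow> 0\<close>, every finite part of the support eventually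
  lies in \<open>\<Gamma>\<^bsub>\<epsilon>\<^sub>n\<^esub>\<close>. Hence the empirical mass of \<open>\<Gamma>\<^bsub>\<epsilon>\<^sub>n\<^esub>\<close> tends to \<open>1\<close>, and
  choosing a finite part that carries almost all of \<open>H(\<mu>)\<close> gives
  \<open>liminf H(\<mu>\<^sub>n\<^sub>,\<^sub>\<epsilon>\<^sub>n) \<ge> H(\<mu>)\<close>. Conversely, Gibbs' inequality bounds \<open>H(\<mu>\<^sub>n\<^sub>,\<^sub>\<epsilon>\<^sub>n)\<close> by the
  empirical cross-entropy divided by the mass of \<open>\<Gamma>\<^bsub>\<epsilon>\<^sub>n\<^esub>\<close>, so
  \<open>limsup H(\<mu>\<^sub>n\<^sub>,\<^sub>\<epsilon>\<^sub>n) \<le> H(\<mu>)\<close>.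
\<close>

lemma sum_powers_below_le:
  fixes a y :: real
  assumes a: "a > 1" and y: "y \<ge> 0"
  shows "(\<Sum>j<n. if a^j < y then a^j else 0) \<le> a * y / (a - 1)"
proof -
  have inv: "(a - 1) * (\<Sum>j<n. if a^j < y then a^j else 0) \<le> a^n - 1 \<and>
             (a - 1) * (\<Sum>j<n. if a^j < y then a^j else 0) \<le> max 0 (a * y - 1)" for n
  proof (induction n)
    case (Suc n)
    show ?case
    proof (cases "a^n < y")
      case True
      have "(a - 1) * (\<Sum>j<Suc n. if a^j < y then a^j else 0)
              = (a - 1) * (\<Sum>j<n. if a^j < y then a^j else 0) + (a - 1) * a^n"
        using True by (simp add: algebra_simps)
      also have "\<dots> \<le> a^Suc n - 1" using Suc by (simp add: algebra_simps)
      finally have "(a - 1) * (\<Sum>j<Suc n. if a^j < y then a^j else 0) \<le> a^Suc n - 1" .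
      moreover have "a^Suc n < a * y" using True a by simp
      ultimately show ?thesis by auto
    next
      case False
      have "a^n \<le> a^Suc n" using a by simp
      then show ?thesis using Suc False by auto
    qed
  qed simp
  moreover have "max 0 (a * y - 1) \<le> a * y" using a y by simp
  ultimately have "(a - 1) * (\<Sum>j<n. if a^j < y then a^j else 0) \<le> a * y"
    by (meson order_trans)
  then show ?thesis using a by (simp add: field_simps mult.commute)
qed

lemma sum_inverse_powers_above_le:
  fixes a y :: real
  assumes a: "a > 1" and y: "y \<ge> 0"
  shows "(\<Sum>j<n. if y \<le> a^j then y\<^sup>2 / a^j else 0) \<le> a * y / (a - 1)"
proof (cases "y = 0")
  case False
  then have y0: "y > 0" using y by simp
  define r where "r = 1 / a"
  have r: "0 < r" "r < 1" using a by (auto simp: r_def)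
  have inv: "(1 - r) * (\<Sum>j<n. if y \<le> a^j then r^j else 0) \<le> max 0 (1 / y - r^n)" for n
  proof (induction n)
    case (Suc n)
    show ?case
    proof (cases "y \<le> a^n")
      case True
      have "r^n \<le> 1 / y"
        using True y0 a by (simp add: r_def power_one_over field_simps)
      then have "(1 - r) * (\<Sum>j<Suc n. if y \<le> a^j then r^j else 0) \<le> 1 / y - r^n + (1 - r) * r^n"
        using Suc True by (simp add: algebra_simps)
      also have "\<dots> = 1 / y - r^Suc n" by (simp add: algebra_simps)
      finally show ?thesis by simp
    next
      case False
      have "r^Suc n \<le> r^n" using r by (simp add: power_decreasing_iff)
      then show ?thesis using Suc False by simp
    qed
  qed simp
  have "max 0 (1 / y - r^n) \<le> 1 / y" using r y0 by simp
  then have "(1 - r) * (\<Sum>j<n. if y \<le> a^j then r^j else 0) \<le> 1 / y"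
    using inv[of n] by (rule order_trans[rotated])
  then have S: "(\<Sum>j<n. if y \<le> a^j then r^j else 0) \<le> 1 / (y * (1 - r))"
    using r y0 by (simp add: field_simps mult.commute)
  have "(\<Sum>j<n. if y \<le> a^j then y\<^sup>2 / a^j else 0) = y\<^sup>2 * (\<Sum>j<n. if y \<le> a^j then r^j else 0)"
    unfolding sum_distrib_left by (intro sum.cong refl) (auto simp: r_def power_one_over)
  also have "\<dots> \<le> y\<^sup>2 * (1 / (y * (1 - r)))" using S by (intro mult_left_mono) auto
  also have "\<dots> = a * y / (a - 1)" using y0 a by (simp add: r_def power2_eq_square field_simps)
  finally show ?thesis .
qed (use a in simp)

lemma sum_truncation_weights_le:
  fixes a \<delta> y :: real
  assumes a: "a > 1" and d: "\<delta> > 0" and y: "y \<ge> 0"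
  shows "(\<Sum>j<n. 2 * a^j * of_bool (a^j < y) + (if y \<le> a^j then y else 0)\<^sup>2 / (a^j * \<delta>\<^sup>2))
           \<le> (2 * a / (a - 1) + a / ((a - 1) * \<delta>\<^sup>2)) * y"
proof -
  have "(\<Sum>j<n. 2 * a^j * of_bool (a^j < y) + (if y \<le> a^j then y else 0)\<^sup>2 / (a^j * \<delta>\<^sup>2))
          = 2 * (\<Sum>j<n. if a^j < y then a^j else 0)
            + (\<Sum>j<n. if y \<le> a^j then y\<^sup>2 / a^j else 0) / \<delta>\<^sup>2"
  proof -
    have "2 * a^j * of_bool (a^j < y) + (if y \<le> a^j then y else 0)\<^sup>2 / (a^j * \<delta>\<^sup>2)
            = 2 * (if a^j < y then a^j else 0) + (if y \<le> a^j then y\<^sup>2 / a^j else 0) / \<delta>\<^sup>2" for j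
      by simp
    then show ?thesis by (simp add: sum.distrib sum_distrib_left sum_divide_distrib)
  qed
  also have "\<dots> \<le> 2 * (a * y / (a - 1)) + (a * y / (a - 1)) / \<delta>\<^sup>2"
    by (intro add_mono mult_left_mono divide_right_mono sum_powers_below_le
        sum_inverse_powers_above_le a y) auto
  also have "\<dots> = (2 * a / (a - 1) + a / ((a - 1) * \<delta>\<^sup>2)) * y"
    using a d by (simp add: field_simps)
  finally show ?thesis .
qed

text \<open>Passing from the subsequence \<open>\<lceil>a^j\<rceil>\<close> to all indices costs only a factor \<open>a\<close>,
  because \<open>s\<close> is monotone and consecutive terms of the subsequence have ratio about \<open>a\<close>.\<close>

lemma eventually_le_of_geometric_subsequence:
  fixes a c :: real and s :: "nat \<Rightarrow> real"
  assumes a: "a > 1" and c: "c \<ge> 0" and mono: "mono s"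
    and ev: "eventually (\<lambda>j. s (nat \<lceil>a^j\<rceil>) \<le> nat \<lceil>a^j\<rceil> * c) sequentially"
  shows "eventually (\<lambda>n. s n \<le> (a * n + 1) * c) sequentially"
proof -
  obtain J where J: "\<And>j. j \<ge> J \<Longrightarrow> s (nat \<lceil>a^j\<rceil>) \<le> nat \<lceil>a^j\<rceil> * c"
    using ev by (auto simp: eventually_sequentially)
  obtain N0 :: nat where N0: "a^J < N0" using reals_Archimedean2 by blast
  show ?thesis unfolding eventually_sequentially
  proof (intro exI[of _ "max N0 2"] allI impI)
    fix n :: nat assume n: "max N0 2 \<le> n"
    have ex: "\<exists>j. real n \<le> a^j" using real_arch_pow[OF a] by (metis less_eq_real_def)
    define j where "j = (LEAST j. real n \<le> a^j)"
    have j1: "real n \<le> a^j" unfolding j_def by (rule LeastI_ex[OF ex])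
    have jJ: "j \<ge> J"
    proof (rule ccontr)
      assume "\<not> J \<le> j"
      then have "a^j \<le> a^J" using a by (intro power_increasing) auto
      then show False using j1 N0 n by linarith
    qed
    obtain i where i: "j = Suc i" using j1 n by (cases j) auto
    have "\<not> real n \<le> a^i" using not_less_Least[of i "\<lambda>j. real n \<le> a^j"] i unfolding j_def by simp
    then have ai: "a^j < a * n" using a i by simp
    have "s n \<le> s (nat \<lceil>a^j\<rceil>)" using j1 by (intro monoD[OF mono]) linarith
    also have "\<dots> \<le> nat \<lceil>a^j\<rceil> * c" using J[OF jJ] .
    also have "\<dots> \<le> (a * n + 1) * c"
    proof (rule mult_right_mono[OF _ c])
      have "real (nat \<lceil>a^j\<rceil>) < a^j + 1"
        using a by (simp add: of_nat_nat) linarith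
      then show "real (nat \<lceil>a^j\<rceil>) \<le> a * real n + 1" using ai by simp
    qed
    finally show "s n \<le> (a * n + 1) * c" .
  qed
qed

lemma eventually_geometric_slack:
  fixes E \<eta> :: real
  assumes E: "0 \<le> E" and eta: "0 < \<eta>"
  shows "\<exists>a>1. \<exists>\<delta>>0. eventually (\<lambda>n. (a * real n + 1) * (E + \<delta>) \<le> n * (E + \<eta>)) sequentially"
proof -
  define \<delta> where "\<delta> = \<eta> / 4"
  define a where "a = 1 + \<eta> / (4 * (E + \<eta>))"
  have "a > 1" "\<delta> > 0" using E eta by (simp_all add: a_def \<delta>_def)
  have "a * (E + \<delta>) = E + \<delta> + (\<eta> / 4) * ((E + \<delta>) / (E + \<eta>))"
    using E eta by (simp add: a_def field_simps)
  moreover have "(E + \<delta>) / (E + \<eta>) \<le> 1" using E eta by (simp add: \<delta>_def)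
  then have "(\<eta> / 4) * ((E + \<delta>) / (E + \<eta>)) \<le> \<eta> / 4" using eta by (intro mult_left_le) auto
  ultimately have a_slack: "a * (E + \<delta>) \<le> E + \<eta> / 2" by (simp add: \<delta>_def)
  have "eventually (\<lambda>n. (a * n + 1) * (E + \<delta>) \<le> n * (E + \<eta>)) sequentially"
    using eventually_ge_at_top[of "nat \<lceil>2 * (E + \<delta>) / \<eta>\<rceil>"]
  proof (rule eventually_mono)
    fix n assume "nat \<lceil>2 * (E + \<delta>) / \<eta>\<rceil> \<le> n"
    then have "2 * (E + \<delta>) / \<eta> \<le> n" by linarith
    then have n: "E + \<delta> \<le> n * (\<eta> / 2)" using eta by (simp add: field_simps)
    have "(a * n + 1) * (E + \<delta>) = n * (a * (E + \<delta>)) + (E + \<delta>)" by (simp add: algebra_simps)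
    also have "\<dots> \<le> n * (E + \<eta> / 2) + n * (\<eta> / 2)"
      by (intro add_mono mult_left_mono a_slack n) auto
    finally show "(a * n + 1) * (E + \<delta>) \<le> n * (E + \<eta>)" by (simp add: algebra_simps)
  qed
  with \<open>a > 1\<close> \<open>\<delta> > 0\<close> show ?thesis by blast
qed

section \<open>Empirical measures and the entropy of the conditional empirical measure\<close>

lemma emp_nonneg: "0 \<le> emp n w x"
  by (simp add: emp_def)

lemma emp_eq_average: "emp n w x = (\<Sum>k<n. indicator {x} (w k)) / n"
proof -
  have "{k\<in>{..<n}. w k = x} = {..<n} \<inter> {k. w k = x}" by auto
  then have "(\<Sum>k<n. indicator {x} (w k)) = real (card {k\<in>{..<n}. w k = x})"
    using sum.inter_restrict[of "{..<n}" "\<lambda>_. 1 :: real" "{k. w k = x}"]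
    by (simp add: indicator_def of_bool_def)
  then show ?thesis by (simp add: emp_def)
qed

lemma sum_emp_mult:
  fixes w :: "nat \<Rightarrow> 'a" and f :: "'a \<Rightarrow> real"
  shows "(\<Sum>x\<in>w ` {..<n}. emp n w x * f x) = (\<Sum>k<n. f (w k)) / n"
proof -
  have "(\<Sum>k<n. f (w k)) = (\<Sum>x\<in>w ` {..<n}. \<Sum>k\<in>{k. k \<in> {..<n} \<and> w k = x}. f (w k))"
    by (rule sum.image_gen) simp
  also have "\<dots> = (\<Sum>x\<in>w ` {..<n}. real (card {k\<in>{..<n}. w k = x}) * f x)"
    by (intro sum.cong refl) simp
  finally show ?thesis by (simp add: emp_def sum_divide_distrib)
qed

lemma emp_pos_imp_in_sample: "emp n w x > 0 \<Longrightarrow> x \<in> w ` {..<n}"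
  by (auto simp: emp_def zero_less_divide_iff card_gt_0_iff)

lemma Gam_subset_sample: "eps > 0 \<Longrightarrow> Gam n w eps \<subseteq> w ` {..<n}"
  by (auto simp: Gam_def intro!: emp_pos_imp_in_sample)

lemma finite_Gam: "eps > 0 \<Longrightarrow> finite (Gam n w eps)"
  by (rule finite_subset[OF Gam_subset_sample]) auto

lemma sum_emp_Gam_le_1: "eps > 0 \<Longrightarrow> (\<Sum>y\<in>Gam n w eps. emp n w y) \<le> 1"
proof -
  assume "eps > 0"
  then have "(\<Sum>y\<in>Gam n w eps. emp n w y) \<le> (\<Sum>y\<in>w ` {..<n}. emp n w y)"
    by (intro sum_mono2 Gam_subset_sample emp_nonneg) auto
  also have "\<dots> \<le> 1"
    using sum_emp_mult[of n w "\<lambda>_. 1"] by simp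
  finally show ?thesis .
qed

lemma sum_emp_Gam_pos:
  assumes e: "eps > 0" and ne: "Gam n w eps \<noteq> {}"
  shows "(\<Sum>y\<in>Gam n w eps. emp n w y) > 0"
proof -
  obtain x where x: "x \<in> Gam n w eps" using ne by auto
  then have "0 < emp n w x" using e by (simp add: Gam_def)
  also have "\<dots> \<le> (\<Sum>y\<in>Gam n w eps. emp n w y)"
    by (rule member_le_sum[OF x]) (auto simp: emp_nonneg finite_Gam[OF e])
  finally show ?thesis .
qed

lemma cond_emp_le_1:
  assumes e: "eps > 0"
  shows "cond_emp n w eps x \<le> 1"
proof (cases "x \<in> Gam n w eps")
  case True
  then have "emp n w x \<le> (\<Sum>y\<in>Gam n w eps. emp n w y)"
    by (intro member_le_sum) (auto simp: emp_nonneg finite_Gam[OF e])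
  moreover have "(\<Sum>y\<in>Gam n w eps. emp n w y) > 0"
    using True by (intro sum_emp_Gam_pos[OF e]) auto
  ultimately show ?thesis using True by (simp add: cond_emp_def)
qed (simp add: cond_emp_def)

lemma entropy_fun_cond_emp:
  assumes e: "eps > 0" and ne: "Gam n w eps \<noteq> {}"
  shows "entropy_fun b (cond_emp n w eps)
           = - (\<Sum>x\<in>Gam n w eps. cond_emp n w eps x * log b (cond_emp n w eps x))"
proof -
  have "{x. cond_emp n w eps x > 0} = Gam n w eps"
    using sum_emp_Gam_pos[OF e ne] e
    by (auto simp: cond_emp_def Gam_def split: if_splits)
  then show ?thesis by (simp add: entropy_fun_def finite_Gam[OF e])
qed

definition self_information :: "real \<Rightarrow> 'a pmf \<Rightarrow> 'a \<Rightarrow> real" where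
  "self_information b p x = (if pmf p x > 0 then - log b (pmf p x) else 0)"

lemma self_information_nonneg: "b > 1 \<Longrightarrow> 0 \<le> self_information b p x"
  using pmf_le_1[of p x] by (auto simp: self_information_def)

lemma mult_log_diff_le:
  fixes p q b :: real
  assumes b: "b > 1" and p: "p > 0" and q: "q > 0"
  shows "q * (log b p - log b q) \<le> (p - q) / ln b"
proof -
  have "q * (log b p - log b q) = q * ln (p / q) / ln b"
    using p q by (simp add: log_def ln_div diff_divide_distrib[symmetric] right_diff_distrib)
  also have "\<dots> \<le> q * (p / q - 1) / ln b"
    using p q b by (intro divide_right_mono mult_left_mono ln_le_minus_one) auto
  also have "\<dots> = (p - q) / ln b" using q b by (simp add: field_simps)
  finally show ?thesis .
qed

text \<open>Gibbs' inequality against \<open>\<mu>\<close> on \<open>\<Gamma>\<close>, followed by enlarging \<open>\<Gamma>\<close> to the whole sample.\<close>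

lemma entropy_cond_emp_le_cross_entropy:
  fixes \<mu> :: "'a pmf"
  assumes b: "b > 1" and e: "eps > 0" and ne: "Gam n w eps \<noteq> {}"
    and supp: "\<And>k. pmf \<mu> (w k) > 0"
  shows "entropy_fun b (cond_emp n w eps)
           \<le> ((\<Sum>k<n. self_information b \<mu> (w k)) / n) / (\<Sum>y\<in>Gam n w eps. emp n w y)"
proof -
  define G where "G = Gam n w eps"
  define S where "S = (\<Sum>y\<in>G. emp n w y)"
  define q where "q = cond_emp n w eps"
  have fG: "finite G" unfolding G_def by (rule finite_Gam[OF e])
  have Sp: "S > 0" unfolding S_def G_def by (rule sum_emp_Gam_pos[OF e ne])
  have qG: "q x = emp n w x / S" if "x \<in> G" for x
    using that by (simp add: q_def cond_emp_def G_def S_def)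
  have G_sample: "G \<subseteq> w ` {..<n}" unfolding G_def by (rule Gam_subset_sample[OF e])
  have pG: "pmf \<mu> x > 0" if "x \<in> G" for x using that G_sample supp by auto
  have qpos: "q x > 0" if "x \<in> G" for x
    using that e Sp by (simp add: qG G_def Gam_def)
  have sum_q: "(\<Sum>x\<in>G. q x) = 1"
    using Sp by (simp add: qG sum_divide_distrib[symmetric] S_def)
  have sum_p: "(\<Sum>x\<in>G. pmf \<mu> x) \<le> 1"
    using measure_measure_pmf_finite[OF fG, of \<mu>] measure_pmf.prob_le_1[of \<mu> G] by simp
  have "(\<Sum>x\<in>G. q x * (log b (pmf \<mu> x) - log b (q x))) \<le> (\<Sum>x\<in>G. (pmf \<mu> x - q x) / ln b)"
    by (intro sum_mono mult_log_diff_le b pG qpos)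
  also have "\<dots> = ((\<Sum>x\<in>G. pmf \<mu> x) - (\<Sum>x\<in>G. q x)) / ln b"
    by (simp add: sum_divide_distrib[symmetric] sum_subtractf)
  also have "\<dots> \<le> 0" using sum_p sum_q b by (simp add: divide_nonpos_pos)
  finally have gibbs: "(\<Sum>x\<in>G. q x * (log b (pmf \<mu> x) - log b (q x))) \<le> 0" .
  have "entropy_fun b (cond_emp n w eps) = - (\<Sum>x\<in>G. q x * log b (q x))"
    unfolding q_def G_def by (rule entropy_fun_cond_emp[OF e ne])
  also have "\<dots> \<le> (\<Sum>x\<in>G. q x * self_information b \<mu> x)"
    using gibbs pG by (simp add: self_information_def algebra_simps sum_subtractf sum_negf)
  also have "\<dots> = (\<Sum>x\<in>G. emp n w x * self_information b \<mu> x) / S"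
    by (simp add: qG sum_divide_distrib)
  also have "\<dots> \<le> (\<Sum>x\<in>w ` {..<n}. emp n w x * self_information b \<mu> x) / S"
    using Sp G_sample b
    by (intro divide_right_mono sum_mono2 mult_nonneg_nonneg emp_nonneg self_information_nonneg) auto
  finally show ?thesis by (simp add: sum_emp_mult S_def G_def)
qed

lemma entropy_cond_emp_ge_partial:
  assumes b: "b > 1" and e: "eps > 0" and ne: "Gam n w eps \<noteq> {}" and F: "F \<subseteq> Gam n w eps"
  shows "- (\<Sum>x\<in>F. cond_emp n w eps x * log b (cond_emp n w eps x))
           \<le> entropy_fun b (cond_emp n w eps)"
proof -
  define q where "q = cond_emp n w eps"
  have term_nonneg: "0 \<le> - (q x * log b (q x))" for x
  proof -
    have "0 \<le> q x"
      using sum_emp_Gam_pos[OF e ne] by (simp add: q_def cond_emp_def emp_nonneg)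
    moreover have "q x \<le> 1" unfolding q_def by (rule cond_emp_le_1[OF e])
    ultimately show ?thesis using b by (cases "q x = 0") (auto simp: mult_nonneg_nonpos)
  qed
  have "- (\<Sum>x\<in>F. q x * log b (q x)) = (\<Sum>x\<in>F. - (q x * log b (q x)))"
    by (simp add: sum_negf)
  also have "\<dots> \<le> (\<Sum>x\<in>Gam n w eps. - (q x * log b (q x)))"
    by (rule sum_mono2[OF finite_Gam[OF e] F term_nonneg])
  also have "\<dots> = entropy_fun b (cond_emp n w eps)"
    by (simp add: entropy_fun_cond_emp[OF e ne] q_def sum_negf)
  finally show ?thesis by (simp add: q_def)
qed

lemma integrable_measure_pmf_bounded:
  fixes f :: "'a \<Rightarrow> real"
  shows "(\<And>x. \<bar>f x\<bar> \<le> c) \<Longrightarrow> integrable (measure_pmf p) f"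
  by (rule measure_pmf.integrable_const_bound[where B = c]) auto

lemma integral_measure_pmf_eq_infsum:
  fixes p :: "'a::countable pmf" and g :: "'a \<Rightarrow> real"
  assumes g0: "\<And>x. 0 \<le> g x" and summable: "(\<lambda>x. pmf p x * g x) summable_on UNIV"
  shows "integrable (measure_pmf p) g"
    and "(\<integral>x. g x \<partial>measure_pmf p) = (\<Sum>\<^sub>\<infinity>x. pmf p x * g x)"
proof -
  define h where "h x = pmf p x * g x" for x
  have "h summable_on UNIV" using summable by (simp add: h_def[abs_def])
  then have "Infinite_Sum.abs_summable_on h UNIV"
    using summable_on_iff_abs_summable_on_real by blast
  then have abs_summable: "Infinite_Set_Sum.abs_summable_on h UNIV"
    using abs_summable_equivalent by blast
  then have "integrable (count_space UNIV) h" by (simp add: abs_summable_on_def)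
  moreover have "integrable (measure_pmf p) g
                   \<longleftrightarrow> integrable (count_space UNIV) (\<lambda>x. pmf p x *\<^sub>R g x)"
    unfolding measure_pmf_eq_density by (rule integrable_density) auto
  ultimately show "integrable (measure_pmf p) g" by (simp add: h_def[abs_def])
  have "(\<integral>x. g x \<partial>measure_pmf p) = (\<integral>x. pmf p x *\<^sub>R g x \<partial>count_space UNIV)"
    unfolding measure_pmf_eq_density by (rule integral_density) auto
  also have "\<dots> = infsetsum h UNIV" by (simp add: infsetsum_def h_def)
  also have "\<dots> = infsum h UNIV" by (rule infsetsum_infsum[OF abs_summable])
  finally show "(\<integral>x. g x \<partial>measure_pmf p) = (\<Sum>\<^sub>\<infinity>x. pmf p x * g x)"
    by (simp add: h_def[abs_def])
qed

lemma integrable_self_information: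
  fixes p :: "'a::countable pmf"
  assumes b: "b > 1"
    and summable: "(\<lambda>x. pmf p x * log b (pmf p x)) summable_on {x. pmf p x > 0}"
  shows "integrable (measure_pmf p) (self_information b p)"
    and "(\<integral>x. self_information b p x \<partial>measure_pmf p) = entropy_fun b (pmf p)"
proof -
  have "(\<lambda>x. pmf p x * self_information b p x) summable_on UNIV
          \<longleftrightarrow> (\<lambda>x. - (pmf p x * log b (pmf p x))) summable_on {x. pmf p x > 0}"
    by (rule summable_on_cong_neutral) (auto simp: self_information_def)
  then have sm: "(\<lambda>x. pmf p x * self_information b p x) summable_on UNIV"
    using summable by (simp add: summable_on_uminus)
  show "integrable (measure_pmf p) (self_information b p)"
    by (rule integral_measure_pmf_eq_infsum(1)[OF self_information_nonneg[OF b] sm])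
  have "(\<integral>x. self_information b p x \<partial>measure_pmf p) = (\<Sum>\<^sub>\<infinity>x. pmf p x * self_information b p x)"
    by (rule integral_measure_pmf_eq_infsum(2)[OF self_information_nonneg[OF b] sm])
  also have "\<dots> = infsum (\<lambda>x. - (pmf p x * log b (pmf p x))) {x. pmf p x > 0}"
    by (rule infsum_cong_neutral) (auto simp: self_information_def)
  finally show "(\<integral>x. self_information b p x \<partial>measure_pmf p) = entropy_fun b (pmf p)"
    by (simp add: infsum_uminus entropy_fun_def)
qed

lemma summable_on_pmf_support: "pmf p summable_on {x. pmf p x > 0}"
  and infsum_pmf_support: "infsum (pmf p) {x. pmf p x > 0} = 1"
  for p :: "'a::countable pmf"
proof -
  have abs_summable: "Infinite_Set_Sum.abs_summable_on (pmf p) {x. pmf p x > 0}"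
    by (rule pmf_abs_summable)
  then show "pmf p summable_on {x. pmf p x > 0}"
    using abs_summable_equivalent summable_on_iff_abs_summable_on_real by blast
  have "infsetsum (pmf p) {x. pmf p x > 0} = 1"
    by (rule infsetsum_pmf_eq_1) (auto simp: set_pmf_eq order_le_neq_trans)
  then show "infsum (pmf p) {x. pmf p x > 0} = 1"
    using infsetsum_infsum[OF abs_summable] by simp
qed

section \<open>A one-sided strong law of large numbers\<close>

text \<open>The bounds of the two bad events in the Borel--Cantelli argument along \<open>\<lceil>a^j\<rceil>\<close>
  (a large summand, or a large truncated sum) add up over \<open>j\<close> to a constant multiple of
  the mean of \<open>g\<close>.\<close>

lemma summable_truncation_bounds:
  fixes p :: "'a pmf" and g :: "'a \<Rightarrow> real" and a \<delta> :: real
  assumes g0: "\<And>x. 0 \<le> g x" and ig: "integrable (measure_pmf p) g"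
    and a: "a > 1" and d: "\<delta> > 0"
  shows "summable (\<lambda>j. 2 * a^j * measure_pmf.prob p {x. a^j < g x}
            + (\<integral>x. (if g x \<le> a^j then g x else 0)\<^sup>2 \<partial>measure_pmf p) / (a^j * \<delta>\<^sup>2))"
proof -
  define f where "f j x = 2 * a^j * of_bool (a^j < g x)
                          + (if g x \<le> a^j then g x else 0)\<^sup>2 / (a^j * \<delta>\<^sup>2)" for j x
  have trunc_sq: "(if g x \<le> a^j then g x else 0)\<^sup>2 \<le> (a^j)\<^sup>2" for j x
    using g0[of x] by (auto intro: power_mono)
  have int_trunc_sq: "integrable (measure_pmf p) (\<lambda>x. (if g x \<le> a^j then g x else 0)\<^sup>2)" for j
    by (rule integrable_measure_pmf_bounded[of _ "(a^j)\<^sup>2"]) (use trunc_sq in auto)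
  have int_ind: "integrable (measure_pmf p) (\<lambda>x. of_bool (a^j < g x) :: real)" for j
    by (rule integrable_measure_pmf_bounded[of _ 1]) auto
  have int_f: "integrable (measure_pmf p) (f j)" for j
    unfolding f_def using int_ind int_trunc_sq by simp
  have integral_f: "(\<integral>x. f j x \<partial>measure_pmf p) = 2 * a^j * measure_pmf.prob p {x. a^j < g x}
            + (\<integral>x. (if g x \<le> a^j then g x else 0)\<^sup>2 \<partial>measure_pmf p) / (a^j * \<delta>\<^sup>2)" for j
  proof -
    have "measure_pmf.prob p {x. a^j < g x} = (\<integral>x. indicator {x. a^j < g x} x \<partial>measure_pmf p)"
      by simp
    then show ?thesis using int_ind int_trunc_sq by (simp add: f_def indicator_def)
  qed
  have "summable (\<lambda>j. \<integral>x. f j x \<partial>measure_pmf p)"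
  proof (rule summableI_nonneg_bounded)
    show "0 \<le> (\<integral>x. f j x \<partial>measure_pmf p)" for j
      by (rule integral_nonneg_AE) (use a in \<open>simp add: f_def\<close>)
    fix n
    have "(\<Sum>j<n. \<integral>x. f j x \<partial>measure_pmf p) = (\<integral>x. (\<Sum>j<n. f j x) \<partial>measure_pmf p)"
      by (rule Bochner_Integration.integral_sum[symmetric]) (rule int_f)
    also have "\<dots> \<le> (\<integral>x. (2 * a / (a - 1) + a / ((a - 1) * \<delta>\<^sup>2)) * g x \<partial>measure_pmf p)"
    proof (intro integral_mono integrable_sum int_f)
      show "(\<Sum>j<n. f j x) \<le> (2 * a / (a - 1) + a / ((a - 1) * \<delta>\<^sup>2)) * g x" for x
        unfolding f_def by (rule sum_truncation_weights_le[OF a d g0])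
    qed (use ig int_f in auto)
    finally show "(\<Sum>j<n. \<integral>x. f j x \<partial>measure_pmf p) \<le> \<dots>" .
  qed
  then show ?thesis by (simp add: integral_f)
qed

locale iid_sequence =
  fixes \<mu> :: "'a::countable pmf"
begin

abbreviation M :: "(nat \<Rightarrow> 'a) measure" where
  "M \<equiv> \<Pi>\<^sub>M i\<in>UNIV. measure_pmf \<mu>"

sublocale P: product_prob_space "\<lambda>_::nat. measure_pmf \<mu>" UNIV
  by unfold_locales

lemma space_M [simp]: "space M = UNIV"
  by (simp add: space_PiM)

lemma measurable_component_comp [measurable]:
  fixes f :: "'a \<Rightarrow> real"
  shows "(\<lambda>w. f (w k)) \<in> borel_measurable M"
  by (rule measurable_compose[OF measurable_component_singleton]) auto

lemma sets_component_pred [measurable]: "{w. P (w k)} \<in> sets M"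
proof -
  have "{w. P (w k)} = (\<lambda>w. w k) -` {x. P x} \<inter> space M" by auto
  also have "\<dots> \<in> sets M"
    by (rule measurable_sets[OF measurable_component_singleton]) auto
  finally show ?thesis .
qed

lemma distr_component: "distr M (measure_pmf \<mu>) (\<lambda>w. w k) = measure_pmf \<mu>"
  by (subst P.PiM_component) auto

lemma prob_component: "measure M {w. P (w k)} = measure_pmf.prob \<mu> {x. P x}"
proof -
  have "measure_pmf.prob \<mu> {x. P x} = measure (distr M (measure_pmf \<mu>) (\<lambda>w. w k)) {x. P x}"
    by (simp add: distr_component)
  also have "\<dots> = measure M {w. P (w k)}"
    by (subst measure_distr) (auto intro: measurable_component_singleton)
  finally show ?thesis by simp
qed

lemma integral_component:
  fixes f :: "'a \<Rightarrow> real"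
  shows "(\<integral>w. f (w k) \<partial>M) = (\<integral>x. f x \<partial>measure_pmf \<mu>)"
proof -
  have "(\<integral>x. f x \<partial>measure_pmf \<mu>) = (\<integral>x. f x \<partial>distr M (measure_pmf \<mu>) (\<lambda>w. w k))"
    by (simp add: distr_component)
  also have "\<dots> = (\<integral>w. f (w k) \<partial>M)"
    by (rule integral_distr) auto
  finally show ?thesis by simp
qed

lemma integral_component_pair:
  fixes f h :: "'a \<Rightarrow> real"
  assumes "k \<noteq> l" "integrable (measure_pmf \<mu>) f" "integrable (measure_pmf \<mu>) h"
  shows "(\<integral>w. f (w k) * h (w l) \<partial>M) = (\<integral>x. f x \<partial>measure_pmf \<mu>) * (\<integral>x. h x \<partial>measure_pmf \<mu>)"
proof -
  define J where "J = {k, l}"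
  define F where "F i = (if i = k then f else h)" for i
  have "(\<integral>w. f (w k) * h (w l) \<partial>M) = (\<integral>w. (\<Prod>i\<in>J. F i (w i)) \<partial>M)"
    using assms by (simp add: J_def F_def)
  also have "\<dots> = (\<integral>y. (\<Prod>i\<in>J. F i (y i)) \<partial>distr M (\<Pi>\<^sub>M i\<in>J. measure_pmf \<mu>) (\<lambda>x. restrict x J))"
  proof (subst integral_distr)
    show "(\<lambda>y. \<Prod>i\<in>J. F i (y i)) \<in> borel_measurable (\<Pi>\<^sub>M i\<in>J. measure_pmf \<mu>)"
      by (intro borel_measurable_prod measurable_compose[OF measurable_component_singleton]) auto
  qed (auto simp: J_def)
  also have "\<dots> = (\<integral>y. (\<Prod>i\<in>J. F i (y i)) \<partial>(\<Pi>\<^sub>M i\<in>J. measure_pmf \<mu>))"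
    by (subst P.distr_PiM_restrict_finite) (auto simp: J_def)
  also have "\<dots> = (\<Prod>i\<in>J. (\<integral>x. F i x \<partial>measure_pmf \<mu>))"
    by (rule P.product_integral_prod) (auto simp: J_def F_def assms)
  also have "\<dots> = (\<integral>x. f x \<partial>measure_pmf \<mu>) * (\<integral>x. h x \<partial>measure_pmf \<mu>)"
    using assms by (simp add: J_def F_def)
  finally show ?thesis .
qed

lemma integral_sum_square_centered:
  fixes h :: "'a \<Rightarrow> real" and N :: nat
  assumes bnd: "\<And>x. \<bar>h x\<bar> \<le> c" and mean0: "(\<integral>x. h x \<partial>measure_pmf \<mu>) = 0"
  shows "(\<integral>w. (\<Sum>k<N. h (w k))\<^sup>2 \<partial>M) = N * (\<integral>x. (h x)\<^sup>2 \<partial>measure_pmf \<mu>)"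
proof -
  have c0: "0 \<le> c" using bnd[of undefined] by simp
  have ih: "integrable (measure_pmf \<mu>) h" by (rule integrable_measure_pmf_bounded[OF bnd])
  have iM: "integrable M (\<lambda>w. h (w k) * h (w l))" for k l
  proof (rule P.integrable_const_bound[where B = "c * c"])
    show "AE w in M. norm (h (w k) * h (w l)) \<le> c * c"
      unfolding real_norm_def abs_mult by (intro AE_I2 mult_mono bnd) (auto simp: c0)
  qed simp
  have "(\<integral>w. (\<Sum>k<N. h (w k))\<^sup>2 \<partial>M) = (\<Sum>k<N. \<Sum>l<N. (\<integral>w. h (w k) * h (w l) \<partial>M))"
    by (simp add: power2_eq_square sum_product iM integrable_sum)
  also have "\<dots> = (\<Sum>k<N. \<Sum>l<N. (if l = k then (\<integral>x. (h x)\<^sup>2 \<partial>measure_pmf \<mu>) else 0))"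
  proof (intro sum.cong refl)
    fix k l
    show "(\<integral>w. h (w k) * h (w l) \<partial>M) = (if l = k then (\<integral>x. (h x)\<^sup>2 \<partial>measure_pmf \<mu>) else 0)"
      using integral_component[of "\<lambda>x. (h x)\<^sup>2" k] integral_component_pair[of k l h h] ih mean0
      by (simp add: power2_eq_square)
  qed
  also have "\<dots> = N * (\<integral>x. (h x)\<^sup>2 \<partial>measure_pmf \<mu>)"
    by simp
  finally show ?thesis .
qed

lemma prob_sum_exceeds_mean_le:
  fixes Z :: "'a \<Rightarrow> real"
  assumes Z0: "\<And>x. 0 \<le> Z x" and ZT: "\<And>x. Z x \<le> T" and N: "N > 0" and d: "\<delta> > 0"
  shows "measure M {w. (\<Sum>k<N. Z (w k)) > N * ((\<integral>x. Z x \<partial>measure_pmf \<mu>) + \<delta>)}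
           \<le> (\<integral>x. (Z x)\<^sup>2 \<partial>measure_pmf \<mu>) / (N * \<delta>\<^sup>2)"
proof -
  define m where "m = (\<integral>x. Z x \<partial>measure_pmf \<mu>)"
  define h where "h x = Z x - m" for x
  have T0: "0 \<le> T" using Z0[of undefined] ZT[of undefined] by simp
  have iZ: "integrable (measure_pmf \<mu>) Z"
    by (rule integrable_measure_pmf_bounded[of _ T]) (use Z0 ZT in \<open>auto simp: abs_le_iff\<close>)
  have iZ2: "integrable (measure_pmf \<mu>) (\<lambda>x. (Z x)\<^sup>2)"
    by (rule integrable_measure_pmf_bounded[of _ "T * T"])
      (use Z0 ZT T0 in \<open>auto simp: power2_eq_square intro!: mult_mono\<close>)
  have m0: "0 \<le> m" unfolding m_def by (rule integral_nonneg_AE) (auto simp: Z0)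
  have mT: "m \<le> T"
    unfolding m_def using measure_pmf.integral_le_const[of \<mu> Z T] ZT iZ T0 by auto
  have hb: "\<bar>h x\<bar> \<le> T + m" for x using Z0[of x] ZT[of x] m0 mT by (auto simp: h_def abs_le_iff)
  have hm: "(\<integral>x. h x \<partial>measure_pmf \<mu>) = 0"
    unfolding h_def using iZ by (simp add: m_def measure_pmf.prob_space)
  have variance_le: "(\<integral>x. (h x)\<^sup>2 \<partial>measure_pmf \<mu>) \<le> (\<integral>x. (Z x)\<^sup>2 \<partial>measure_pmf \<mu>)"
  proof -
    have "(\<integral>x. (h x)\<^sup>2 \<partial>measure_pmf \<mu>) = (\<integral>x. (Z x)\<^sup>2 - 2 * m * Z x + m\<^sup>2 \<partial>measure_pmf \<mu>)"
      by (simp add: h_def power2_diff algebra_simps)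
    also have "\<dots> = (\<integral>x. (Z x)\<^sup>2 \<partial>measure_pmf \<mu>) - m\<^sup>2"
      using iZ iZ2 by (simp add: m_def measure_pmf.prob_space power2_eq_square)
    finally show ?thesis by simp
  qed
  define S where "S w = (\<Sum>k<N. h (w k))" for w
  have SM: "S \<in> borel_measurable M" unfolding S_def by measurable
  have sub: "{w. (\<Sum>k<N. Z (w k)) > N * (m + \<delta>)} \<subseteq> {w \<in> space M. (S w)\<^sup>2 \<ge> (N * \<delta>)\<^sup>2}"
  proof safe
    fix w assume "(\<Sum>k<N. Z (w k)) > N * (m + \<delta>)"
    then have "S w > N * \<delta>" by (simp add: S_def h_def sum_subtractf algebra_simps)
    then show "(S w)\<^sup>2 \<ge> (N * \<delta>)\<^sup>2" using d by (intro power_mono) auto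
  qed simp
  have iS: "integrable M (\<lambda>w. (S w)\<^sup>2)"
  proof (rule P.integrable_const_bound[where B = "(N * (T + m))\<^sup>2"])
    have "(S w)\<^sup>2 \<le> (N * (T + m))\<^sup>2" for w
    proof -
      have "\<bar>S w\<bar> \<le> (\<Sum>k<N. \<bar>h (w k)\<bar>)" unfolding S_def by (rule sum_abs)
      also have "\<dots> \<le> N * (T + m)"
        using sum_bounded_above[of "{..<N}" "\<lambda>k. \<bar>h (w k)\<bar>" "T + m"] hb by simp
      finally show ?thesis
        using abs_le_square_iff[of "S w" "real N * (T + m)"] by simp
    qed
    then show "AE w in M. norm ((S w)\<^sup>2) \<le> (N * (T + m))\<^sup>2"
      by simp
  qed (use SM in simp)
  have "measure M {w. (\<Sum>k<N. Z (w k)) > N * (m + \<delta>)}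
          \<le> measure M {w \<in> space M. (S w)\<^sup>2 \<ge> (N * \<delta>)\<^sup>2}"
    by (rule P.finite_measure_mono[OF sub]) (use SM in measurable)
  also have "\<dots> \<le> (\<integral>w. (S w)\<^sup>2 \<partial>M) / (N * \<delta>)\<^sup>2"
    by (rule integral_Markov_inequality_measure[OF iS, where A = "space M"])
      (use N d in \<open>auto simp del: space_M\<close>)
  also have "(\<integral>w. (S w)\<^sup>2 \<partial>M) = N * (\<integral>x. (h x)\<^sup>2 \<partial>measure_pmf \<mu>)"
    unfolding S_def by (rule integral_sum_square_centered[OF hb hm])
  also have "N * (\<integral>x. (h x)\<^sup>2 \<partial>measure_pmf \<mu>) / (N * \<delta>)\<^sup>2 = (\<integral>x. (h x)\<^sup>2 \<partial>measure_pmf \<mu>) / (N * \<delta>\<^sup>2)"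
    using N by (simp add: power2_eq_square field_simps)
  also have "\<dots> \<le> (\<integral>x. (Z x)\<^sup>2 \<partial>measure_pmf \<mu>) / (N * \<delta>\<^sup>2)"
    by (rule divide_right_mono[OF variance_le]) (use N d in simp)
  finally show ?thesis unfolding m_def .
qed

lemma prob_sum_exceeds_mean_truncated_le:
  fixes g :: "'a \<Rightarrow> real"
  assumes g0: "\<And>x. 0 \<le> g x" and ig: "integrable (measure_pmf \<mu>) g"
    and T: "0 \<le> T" and N: "N > 0" and d: "\<delta> > 0"
  shows "measure M {w. (\<Sum>k<N. g (w k)) > N * ((\<integral>x. g x \<partial>measure_pmf \<mu>) + \<delta>)}
           \<le> N * measure_pmf.prob \<mu> {x. T < g x}
             + (\<integral>x. (if g x \<le> T then g x else 0)\<^sup>2 \<partial>measure_pmf \<mu>) / (N * \<delta>\<^sup>2)"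
proof -
  define Z where "Z x = (if g x \<le> T then g x else 0)" for x
  have Z: "0 \<le> Z x" "Z x \<le> T" "Z x \<le> g x" for x using g0[of x] T by (auto simp: Z_def)
  have iZ: "integrable (measure_pmf \<mu>) Z"
    by (rule integrable_measure_pmf_bounded[of _ T]) (use Z in \<open>auto simp: abs_le_iff\<close>)
  define B where "B = (\<Union>k<N. {w. T < g (w k)})"
  define C where "C = {w. (\<Sum>k<N. Z (w k)) > N * ((\<integral>x. Z x \<partial>measure_pmf \<mu>) + \<delta>)}"
  have B: "B \<in> sets M" unfolding B_def by measurable
  have C: "C \<in> sets M"
  proof -
    have "C = {w \<in> space M. N * ((\<integral>x. Z x \<partial>measure_pmf \<mu>) + \<delta>) < (\<Sum>k<N. Z (w k))}"
      by (auto simp: C_def)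
    also have "\<dots> \<in> sets M" by measurable
    finally show ?thesis .
  qed
  have sub: "{w. (\<Sum>k<N. g (w k)) > N * ((\<integral>x. g x \<partial>measure_pmf \<mu>) + \<delta>)} \<subseteq> B \<union> C"
  proof (rule subsetI, rule ccontr)
    fix w assume w: "w \<in> {w. (\<Sum>k<N. g (w k)) > N * ((\<integral>x. g x \<partial>measure_pmf \<mu>) + \<delta>)}" "w \<notin> B \<union> C"
    then have "(\<Sum>k<N. g (w k)) = (\<Sum>k<N. Z (w k))"
      by (intro sum.cong) (auto simp: B_def Z_def not_less)
    also have "\<dots> \<le> N * ((\<integral>x. Z x \<partial>measure_pmf \<mu>) + \<delta>)" using w by (simp add: C_def not_less)
    also have "\<dots> \<le> N * ((\<integral>x. g x \<partial>measure_pmf \<mu>) + \<delta>)"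
      by (intro mult_left_mono add_right_mono integral_mono iZ ig Z) auto
    finally show False using w by simp
  qed
  have "measure M {w. (\<Sum>k<N. g (w k)) > N * ((\<integral>x. g x \<partial>measure_pmf \<mu>) + \<delta>)} \<le> measure M (B \<union> C)"
    using sub B C by (intro P.finite_measure_mono) auto
  also have "\<dots> \<le> measure M B + measure M C"
    using B C by (rule measure_Un_le)
  also have "measure M B \<le> (\<Sum>k<N. measure M {w. T < g (w k)})"
    unfolding B_def by (rule P.finite_measure_subadditive_finite) auto
  also have "\<dots> = N * measure_pmf.prob \<mu> {x. T < g x}"
    using prob_component[of "\<lambda>x. T < g x"] by simp
  also have "measure M C \<le> (\<integral>x. (Z x)\<^sup>2 \<partial>measure_pmf \<mu>) / (N * \<delta>\<^sup>2)"
    unfolding C_def by (rule prob_sum_exceeds_mean_le[OF Z(1,2) N d])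
  finally show ?thesis by (simp add: Z_def)
qed

lemma AE_eventually_sum_le_geometric:
  fixes g :: "'a \<Rightarrow> real" and a \<delta> :: real
  assumes g0: "\<And>x. 0 \<le> g x" and ig: "integrable (measure_pmf \<mu>) g"
    and a: "a > 1" and d: "\<delta> > 0"
  shows "AE w in M. eventually (\<lambda>j. (\<Sum>k<nat \<lceil>a^j\<rceil>. g (w k))
           \<le> nat \<lceil>a^j\<rceil> * ((\<integral>x. g x \<partial>measure_pmf \<mu>) + \<delta>)) sequentially"
proof -
  define N where "N j = nat \<lceil>a^j\<rceil>" for j
  define E where "E j = {w. (\<Sum>k<N j. g (w k)) > N j * ((\<integral>x. g x \<partial>measure_pmf \<mu>) + \<delta>)}" for j
  have aj: "1 \<le> a^j" for j using a by simp
  have N: "a^j \<le> N j" "N j \<le> 2 * a^j" "0 < N j" for j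
    using aj[of j] by (auto simp: N_def) linarith+
  have E_sets: "E j \<in> sets M" for j
  proof -
    have "E j = {w \<in> space M. N j * ((\<integral>x. g x \<partial>measure_pmf \<mu>) + \<delta>) < (\<Sum>k<N j. g (w k))}"
      by (auto simp: E_def)
    also have "\<dots> \<in> sets M" by measurable
    finally show ?thesis .
  qed
  have prob_E: "measure M (E j) \<le> 2 * a^j * measure_pmf.prob \<mu> {x. a^j < g x}
                  + (\<integral>x. (if g x \<le> a^j then g x else 0)\<^sup>2 \<partial>measure_pmf \<mu>) / (a^j * \<delta>\<^sup>2)" for j
  proof -
    have "measure M (E j) \<le> N j * measure_pmf.prob \<mu> {x. a^j < g x}
            + (\<integral>x. (if g x \<le> a^j then g x else 0)\<^sup>2 \<partial>measure_pmf \<mu>) / (N j * \<delta>\<^sup>2)"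
      unfolding E_def using a by (intro prob_sum_exceeds_mean_truncated_le g0 ig N d) auto
    also have "\<dots> \<le> 2 * a^j * measure_pmf.prob \<mu> {x. a^j < g x}
            + (\<integral>x. (if g x \<le> a^j then g x else 0)\<^sup>2 \<partial>measure_pmf \<mu>) / (a^j * \<delta>\<^sup>2)"
      using N aj d a
      by (intro add_mono mult_right_mono divide_left_mono integral_nonneg_AE)
        (auto intro!: mult_pos_pos)
    finally show ?thesis .
  qed
  have "summable (\<lambda>j. measure M (E j))"
    by (rule summable_comparison_test'[OF summable_truncation_bounds[OF g0 ig a d], of 0])
      (use prob_E in auto)
  then have "AE w in M. eventually (\<lambda>j. w \<in> space M - E j) sequentially"
    by (intro borel_cantelli_AE1 E_sets) (auto simp: P.emeasure_finite less_top[symmetric])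
  then show ?thesis
    by eventually_elim (auto simp: E_def N_def not_less elim!: eventually_mono)
qed

lemma AE_eventually_sum_le_mean_plus:
  fixes g :: "'a \<Rightarrow> real" and \<eta> :: real
  assumes g0: "\<And>x. 0 \<le> g x" and ig: "integrable (measure_pmf \<mu>) g" and eta: "\<eta> > 0"
  shows "AE w in M. eventually (\<lambda>n. (\<Sum>k<n. g (w k)) \<le> n * ((\<integral>x. g x \<partial>measure_pmf \<mu>) + \<eta>)) sequentially"
proof -
  define E where "E = (\<integral>x. g x \<partial>measure_pmf \<mu>)"
  have "0 \<le> E" unfolding E_def by (rule integral_nonneg_AE) (simp add: g0)
  then obtain a \<delta> :: real where a: "a > 1" and d: "\<delta> > 0"
    and slack: "eventually (\<lambda>n. (a * n + 1) * (E + \<delta>) \<le> n * (E + \<eta>)) sequentially"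
    using eventually_geometric_slack[OF _ eta] by blast
  show ?thesis using AE_eventually_sum_le_geometric[OF g0 ig a d]
  proof eventually_elim
    case (elim w)
    have "mono (\<lambda>n. \<Sum>k<n. g (w k))"
      by (intro monoI sum_mono2) (auto simp: g0)
    moreover have "eventually (\<lambda>j. (\<Sum>k<nat \<lceil>a^j\<rceil>. g (w k)) \<le> nat \<lceil>a^j\<rceil> * (E + \<delta>)) sequentially"
      using elim by (simp add: E_def)
    ultimately have "eventually (\<lambda>n. (\<Sum>k<n. g (w k)) \<le> (a * n + 1) * (E + \<delta>)) sequentially"
      using \<open>0 \<le> E\<close> d by (intro eventually_le_of_geometric_subsequence[OF a]) auto
    with slack show ?case
      unfolding E_def[symmetric] by eventually_elim (rule order_trans)
  qed
qed

lemma AE_eventually_sum_le: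
  fixes g :: "'a \<Rightarrow> real"
  assumes g0: "\<And>x. 0 \<le> g x" and ig: "integrable (measure_pmf \<mu>) g"
  shows "AE w in M. \<forall>\<eta>>0. eventually (\<lambda>n. (\<Sum>k<n. g (w k))
                                          \<le> n * ((\<integral>x. g x \<partial>measure_pmf \<mu>) + \<eta>)) sequentially"
proof -
  have "AE w in M. \<forall>m::nat. eventually (\<lambda>n. (\<Sum>k<n. g (w k))
                              \<le> n * ((\<integral>x. g x \<partial>measure_pmf \<mu>) + 1 / Suc m)) sequentially"
    by (subst AE_all_countable) (auto intro: AE_eventually_sum_le_mean_plus[OF g0 ig])
  then show ?thesis
  proof eventually_elim
    case (elim w)
    show ?case
    proof (intro allI impI)
      fix \<eta> :: real assume "0 < \<eta>"
      then obtain m :: nat where m: "1 / Suc m < \<eta>" using nat_approx_posE by blast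
      show "eventually (\<lambda>n. (\<Sum>k<n. g (w k)) \<le> n * ((\<integral>x. g x \<partial>measure_pmf \<mu>) + \<eta>)) sequentially"
        using elim[rule_format, of m]
        by (rule eventually_mono) (use m in \<open>smt (verit) mult_left_mono of_nat_0_le_iff\<close>)
    qed
  qed
qed

text \<open>For bounded variables the lower bound follows from the upper bound applied to \<open>c - g\<close>.\<close>

lemma AE_average_tendsto:
  fixes g :: "'a \<Rightarrow> real"
  assumes g0: "\<And>x. 0 \<le> g x" and gc: "\<And>x. g x \<le> c"
  shows "AE w in M. (\<lambda>n. (\<Sum>k<n. g (w k)) / n) \<longlonglongrightarrow> (\<integral>x. g x \<partial>measure_pmf \<mu>)"
proof -
  define m where "m = (\<integral>x. g x \<partial>measure_pmf \<mu>)"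
  have ig: "integrable (measure_pmf \<mu>) g"
    by (rule integrable_measure_pmf_bounded[of _ c]) (use g0 gc in \<open>auto simp: abs_le_iff\<close>)
  have ih: "integrable (measure_pmf \<mu>) (\<lambda>x. c - g x)" using ig by simp
  have mh: "(\<integral>x. c - g x \<partial>measure_pmf \<mu>) = c - m"
    using ig by (simp add: m_def measure_pmf.prob_space)
  have "AE w in M. \<forall>\<eta>>0. eventually (\<lambda>n. (\<Sum>k<n. c - g (w k)) \<le> n * (c - m + \<eta>)) sequentially"
    using AE_eventually_sum_le[of "\<lambda>x. c - g x"] gc ih mh by simp
  with AE_eventually_sum_le[OF g0 ig]
  show ?thesis unfolding m_def[symmetric]
  proof eventually_elim
    case (elim w)
    show ?case
    proof (rule order_tendstoI)
      fix y assume "m < y"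
      then have "eventually (\<lambda>n. (\<Sum>k<n. g (w k)) \<le> n * (m + (y - m) / 2)) sequentially"
        using elim(1) by simp
      with eventually_gt_at_top[of 0]
      show "eventually (\<lambda>n. (\<Sum>k<n. g (w k)) / n < y) sequentially"
      proof eventually_elim
        case (elim n)
        have "real n * (m + (y - m) / 2) < real n * y"
          by (rule mult_strict_left_mono) (use elim \<open>m < y\<close> in \<open>auto simp: field_simps\<close>)
        then have "(\<Sum>k<n. g (w k)) < real n * y" using elim by linarith
        then show ?case using elim by (simp add: divide_less_eq mult.commute)
      qed
    next
      fix y assume "y < m"
      then have "eventually (\<lambda>n. (\<Sum>k<n. c - g (w k)) \<le> n * (c - m + (m - y) / 2)) sequentially"
        using elim(2) by simp
      with eventually_gt_at_top[of 0]
      show "eventually (\<lambda>n. y < (\<Sum>k<n. g (w k)) / n) sequentially"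
      proof eventually_elim
        case (elim n)
        have "real n * y < real n * (m - (m - y) / 2)"
          by (rule mult_strict_left_mono) (use elim \<open>y < m\<close> in \<open>auto simp: field_simps\<close>)
        moreover have "(\<Sum>k<n. c - g (w k)) = n * c - (\<Sum>k<n. g (w k))"
          by (simp add: sum_subtractf)
        ultimately have "real n * y < (\<Sum>k<n. g (w k))" using elim by (simp add: algebra_simps)
        then show ?case using elim by (simp add: less_divide_eq mult.commute)
      qed
    qed
  qed
qed

lemma AE_emp_tendsto_pmf: "AE w in M. \<forall>x. (\<lambda>n. emp n w x) \<longlonglongrightarrow> pmf \<mu> x"
proof (subst AE_all_countable, intro allI)
  fix x
  have "AE w in M. (\<lambda>n. (\<Sum>k<n. indicator {x} (w k)) / n) \<longlonglongrightarrow> (\<integral>y. indicator {x} y \<partial>measure_pmf \<mu>)"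
    by (rule AE_average_tendsto[of _ 1]) (auto simp: indicator_def)
  then show "AE w in M. (\<lambda>n. emp n w x) \<longlonglongrightarrow> pmf \<mu> x"
    by (simp add: emp_eq_average measure_pmf_single)
qed

lemma AE_pmf_component_pos: "AE w in M. \<forall>k. pmf \<mu> (w k) > 0"
proof (subst AE_all_countable, intro allI)
  fix k :: nat
  have "AE x in measure_pmf \<mu>. pmf \<mu> x > 0"
    by (simp add: AE_measure_pmf_iff set_pmf_iff pmf_positive)
  then show "AE w in M. pmf \<mu> (w k) > 0"
    by (rule AE_PiM_component[rotated 2]) (auto intro: prob_space_measure_pmf)
qed

end

section \<open>Convergence along a typical sample path\<close>

lemma tendsto_zero_of_bigo_neg_powr:
  fixes eps :: "nat \<Rightarrow> real" and \<tau> :: real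
  assumes tau: "0 < \<tau>" and eps_O: "eps \<in> O(\<lambda>n. real n powr (- \<tau>))"
  shows "eps \<longlonglongrightarrow> 0"
proof -
  have "((\<lambda>n. real n powr (- \<tau>) / 1) \<longlongrightarrow> 0) sequentially"
    using tendsto_neg_powr[OF _ filterlim_real_sequentially, of "- \<tau>"] tau by simp
  then have "(\<lambda>n. real n powr (- \<tau>)) \<in> o(\<lambda>_. 1)"
    by (rule smalloI_tendsto) simp
  then have "eps \<in> o(\<lambda>_. 1)" by (rule landau_o.big_small_trans[OF eps_O])
  from smalloD_tendsto[OF this] show ?thesis by simp
qed

locale typical_path =
  fixes \<mu> :: "'a::countable pmf" and b :: real and eps :: "nat \<Rightarrow> real" and w :: "nat \<Rightarrow> 'a"
  assumes b: "b > 1"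
    and eps_pos: "\<And>n. eps n > 0"
    and eps_tendsto: "eps \<longlonglongrightarrow> 0"
    and supp: "\<And>k. pmf \<mu> (w k) > 0"
    and freq: "\<And>x. (\<lambda>n. emp n w x) \<longlonglongrightarrow> pmf \<mu> x"
    and cross_entropy: "\<And>\<eta>. \<eta> > 0 \<Longrightarrow> eventually (\<lambda>n. (\<Sum>k<n. self_information b \<mu> (w k))
                                     \<le> n * (entropy_fun b (pmf \<mu>) + \<eta>)) sequentially"
    and entropy_summable: "(\<lambda>x. pmf \<mu> x * log b (pmf \<mu> x)) summable_on {x. pmf \<mu> x > 0}"
begin

lemma eventually_subset_Gam:
  assumes F: "finite F" "F \<subseteq> {x. pmf \<mu> x > 0}"
  shows "eventually (\<lambda>n. F \<subseteq> Gam n w (eps n)) sequentially"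
proof -
  have "eventually (\<lambda>n. eps n \<le> emp n w x) sequentially" if x: "x \<in> F" for x
  proof -
    have px: "pmf \<mu> x / 2 > 0" using x F by auto
    have "eventually (\<lambda>n. pmf \<mu> x / 2 < emp n w x) sequentially"
      by (rule order_tendstoD(1)[OF freq]) (use px in simp)
    moreover have "eventually (\<lambda>n. eps n < pmf \<mu> x / 2) sequentially"
      by (rule order_tendstoD(2)[OF eps_tendsto px])
    ultimately show ?thesis by eventually_elim simp
  qed
  then have "eventually (\<lambda>n. \<forall>x\<in>F. eps n \<le> emp n w x) sequentially"
    by (intro eventually_ball_finite F) auto
  then show ?thesis by eventually_elim (auto simp: Gam_def)
qed

lemma eventually_Gam_nonempty: "eventually (\<lambda>n. Gam n w (eps n) \<noteq> {}) sequentially"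
proof -
  obtain x where "x \<in> set_pmf \<mu>" using set_pmf_not_empty[of \<mu>] by blast
  then have "pmf \<mu> x > 0" by (simp add: set_pmf_iff pmf_positive)
  then show ?thesis
    using eventually_subset_Gam[of "{x}"] by (auto elim!: eventually_mono)
qed

lemma Gam_mass_tendsto_1: "(\<lambda>n. \<Sum>y\<in>Gam n w (eps n). emp n w y) \<longlonglongrightarrow> 1"
proof (rule order_tendstoI)
  fix y :: real assume "1 < y"
  then show "eventually (\<lambda>n. (\<Sum>y\<in>Gam n w (eps n). emp n w y) < y) sequentially"
    using sum_emp_Gam_le_1[OF eps_pos] by (auto intro!: always_eventually intro: le_less_trans)
next
  fix y :: real assume y: "y < 1"
  obtain F where F: "finite F" "F \<subseteq> {x. pmf \<mu> x > 0}"
      "dist (sum (pmf \<mu>) F) (infsum (pmf \<mu>) {x. pmf \<mu> x > 0}) \<le> (1 - y) / 2"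
    using infsum_finite_approximation[OF summable_on_pmf_support, of "(1 - y) / 2"] y by auto
  have "- (sum (pmf \<mu>) F - 1) \<le> (1 - y) / 2"
    using abs_le_D2[OF F(3)[unfolded dist_real_def]] by (simp add: infsum_pmf_support)
  then have "y < sum (pmf \<mu>) F" using y by (simp add: field_simps)
  then have "eventually (\<lambda>n. y < (\<Sum>x\<in>F. emp n w x)) sequentially"
    by (rule order_tendstoD(1)[OF tendsto_sum[OF freq]])
  with eventually_subset_Gam[OF F(1,2)]
  show "eventually (\<lambda>n. y < (\<Sum>y\<in>Gam n w (eps n). emp n w y)) sequentially"
  proof eventually_elim
    case (elim n)
    have "(\<Sum>x\<in>F. emp n w x) \<le> (\<Sum>x\<in>Gam n w (eps n). emp n w x)"
      by (rule sum_mono2) (use elim in \<open>auto simp: finite_Gam[OF eps_pos] emp_nonneg\<close>)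
    with elim show ?case by simp
  qed
qed

lemma eventually_entropy_cond_emp_less:
  assumes "\<epsilon> > 0"
  shows "eventually (\<lambda>n. entropy_fun b (cond_emp n w (eps n)) < entropy_fun b (pmf \<mu>) + \<epsilon>) sequentially"
proof -
  define H where "H = entropy_fun b (pmf \<mu>)"
  define S where "S n = (\<Sum>y\<in>Gam n w (eps n). emp n w y)" for n
  have "(\<lambda>n. (H + \<epsilon> / 2) / S n) \<longlonglongrightarrow> (H + \<epsilon> / 2) / 1"
    unfolding S_def by (intro tendsto_divide tendsto_const Gam_mass_tendsto_1) simp
  then have "eventually (\<lambda>n. (H + \<epsilon> / 2) / S n < H + \<epsilon>) sequentially"
    by (rule order_tendstoD(2)) (use assms in simp)
  moreover have "eventually (\<lambda>n. (\<Sum>k<n. self_information b \<mu> (w k)) \<le> n * (H + \<epsilon> / 2)) sequentially"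
    unfolding H_def using assms by (intro cross_entropy) simp
  moreover note eventually_Gam_nonempty eventually_gt_at_top[of 0]
  ultimately
  show ?thesis unfolding H_def[symmetric]
  proof eventually_elim
    case (elim n)
    have S: "S n > 0" unfolding S_def by (rule sum_emp_Gam_pos[OF eps_pos elim(3)])
    have "entropy_fun b (cond_emp n w (eps n)) \<le> ((\<Sum>k<n. self_information b \<mu> (w k)) / n) / S n"
      unfolding S_def by (rule entropy_cond_emp_le_cross_entropy[OF b eps_pos elim(3) supp])
    also have "\<dots> \<le> (H + \<epsilon> / 2) / S n"
      using elim S assms by (intro divide_right_mono) (auto simp: H_def field_simps)
    finally show ?case using elim by simp
  qed
qed

lemma eventually_entropy_cond_emp_greater:
  assumes "\<epsilon> > 0"
  shows "eventually (\<lambda>n. entropy_fun b (pmf \<mu>) - \<epsilon> < entropy_fun b (cond_emp n w (eps n))) sequentially"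
proof -
  define A where "A = {x. pmf \<mu> x > 0}"
  define S where "S n = (\<Sum>y\<in>Gam n w (eps n). emp n w y)" for n
  obtain F where F: "finite F" "F \<subseteq> A"
      "dist (\<Sum>x\<in>F. pmf \<mu> x * log b (pmf \<mu> x)) (infsum (\<lambda>x. pmf \<mu> x * log b (pmf \<mu> x)) A) \<le> \<epsilon> / 2"
    using infsum_finite_approximation[OF entropy_summable, of "\<epsilon> / 2"] assms by (auto simp: A_def)
  have "entropy_fun b (pmf \<mu>) - \<epsilon> < - (\<Sum>x\<in>F. pmf \<mu> x * log b (pmf \<mu> x))"
    using F(3) assms unfolding entropy_fun_def A_def dist_real_def by linarith
  moreover have "(\<lambda>n. - (\<Sum>x\<in>F. (emp n w x / S n) * log b (emp n w x / S n)))
                   \<longlonglongrightarrow> - (\<Sum>x\<in>F. (pmf \<mu> x / 1) * log b (pmf \<mu> x / 1))"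
    using b F(2) unfolding S_def A_def
    by (intro tendsto_minus tendsto_sum tendsto_mult tendsto_log tendsto_divide freq
        Gam_mass_tendsto_1 tendsto_const) auto
  ultimately have "eventually (\<lambda>n. entropy_fun b (pmf \<mu>) - \<epsilon>
                     < - (\<Sum>x\<in>F. (emp n w x / S n) * log b (emp n w x / S n))) sequentially"
    by (intro order_tendstoD(1)) simp_all
  with eventually_subset_Gam[OF F(1) F(2)[unfolded A_def]] eventually_Gam_nonempty
  show ?thesis
  proof eventually_elim
    case (elim n)
    have "- (\<Sum>x\<in>F. (emp n w x / S n) * log b (emp n w x / S n))
            = - (\<Sum>x\<in>F. cond_emp n w (eps n) x * log b (cond_emp n w (eps n) x))"
      using elim by (intro arg_cong[where f = uminus] sum.cong) (auto simp: cond_emp_def S_def A_def)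
    also have "\<dots> \<le> entropy_fun b (cond_emp n w (eps n))"
      by (rule entropy_cond_emp_ge_partial[OF b eps_pos]) (use elim in \<open>auto simp: A_def\<close>)
    finally show ?case using elim by simp
  qed
qed

lemma entropy_cond_emp_tendsto:
  "(\<lambda>n. entropy_fun b (cond_emp n w (eps n))) \<longlonglongrightarrow> entropy_fun b (pmf \<mu>)"
proof (rule order_tendstoI)
  fix y assume "y < entropy_fun b (pmf \<mu>)"
  then show "eventually (\<lambda>n. y < entropy_fun b (cond_emp n w (eps n))) sequentially"
    using eventually_entropy_cond_emp_greater[of "entropy_fun b (pmf \<mu>) - y"] by simp
next
  fix y assume "entropy_fun b (pmf \<mu>) < y"
  then show "eventually (\<lambda>n. entropy_fun b (cond_emp n w (eps n)) < y) sequentially"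
    using eventually_entropy_cond_emp_less[of "y - entropy_fun b (pmf \<mu>)"] by simp
qed

end

theorem theorem4:
  fixes \<mu> :: "'a :: countable pmf" and b \<tau> :: real and eps :: "nat \<Rightarrow> real"
    and dflt :: "nat \<Rightarrow> (nat \<Rightarrow> 'a) \<Rightarrow> real"
  assumes inf: "infinite (UNIV :: 'a set)"
    and b: "b > 1"
    and eps_pos: "\<And>n. eps n > 0"
    and tau: "0 < \<tau>" "\<tau> < 1"
    and eps_O: "eps \<in> O(\<lambda>n. real n powr (- \<tau>))"
    and fin: "(\<lambda>x. pmf \<mu> x * log b (pmf \<mu> x)) summable_on {x. pmf \<mu> x > 0}"
  shows "AE w in (\<Pi>\<^sub>M i\<in>(UNIV :: nat set). measure_pmf \<mu>).
           (\<lambda>n. if Gam n w (eps n) = {} then dflt n w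
                 else entropy_fun b (cond_emp n w (eps n)))
           \<longlonglongrightarrow> entropy_fun b (pmf \<mu>)"
proof -
  interpret iid_sequence \<mu> .
  have eps_tendsto: "eps \<longlonglongrightarrow> 0" by (rule tendsto_zero_of_bigo_neg_powr[OF tau(1) eps_O])
  have "AE w in M. \<forall>\<eta>>0. eventually (\<lambda>n. (\<Sum>k<n. self_information b \<mu> (w k))
                             \<le> n * (entropy_fun b (pmf \<mu>) + \<eta>)) sequentially"
    using AE_eventually_sum_le[OF self_information_nonneg[OF b] integrable_self_information(1)[OF b fin]]
    by (simp add: integrable_self_information(2)[OF b fin])
  with AE_pmf_component_pos AE_emp_tendsto_pmf
  show ?thesis
  proof eventually_elim
    case (elim w)
    interpret typical_path \<mu> b eps w
      using elim b eps_pos eps_tendsto fin by unfold_locales auto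
    have "eventually (\<lambda>n. entropy_fun b (cond_emp n w (eps n)) =
            (if Gam n w (eps n) = {} then dflt n w else entropy_fun b (cond_emp n w (eps n)))) sequentially"
      using eventually_Gam_nonempty by eventually_elim simp
    then show ?case by (rule Lim_transform_eventually[OF entropy_cond_emp_tendsto])
  qed
qed

end
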